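(* Let $S$ be a left amenable group, written additively, and let $X=Z^{*}$ be a dual Banach space. Let $W_{wbc}(X)$ be the family of all nonempty weak$^{*}$-closed, bounded, convex subsets of $X$, and let $F:S\to W_{wbc}(X)$ be a multi-valued map. Then $F$ admits an additive selection, i.e. a map $g:S\to X$ with $g(s+t)=g(s)+g(t)$ for all $s,t\in S$ and $g(s)\in F(s)$ for all $s\in S$, if and only if there exists a function $f:S\to X$ such that $f(s+t)-f(t)\in F(s)$ for all $s,t\in S$.
   Context: $S$ is left amenable if there is a norm-one linear functional $m$ on $\ell_\infty(S)$ with $m(e)=1$ ($e$ the constant function $1$) and $m(f)=m(f_s)$ for all $f\in\ell_\infty(S)$ and $s\in S$, where $f_s(t)=f(s+t)$. *)

theory Defs
  imports "HOL-Analysis.Analysis"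
begin

definition weak_star_topology :: "('z::real_normed_vector \<Rightarrow>\<^sub>L real) topology" where
  "weak_star_topology = pullback_topology UNIV blinfun_apply (product_topology (\<lambda>_. euclideanreal) UNIV)"

definition weak_star_closed :: "('z::real_normed_vector \<Rightarrow>\<^sub>L real) set \<Rightarrow> bool" where
  "weak_star_closed C \<longleftrightarrow> closedin weak_star_topology C"

text \<open>Given m(e) = 1, norm one is equivalent to
  |m f| \<le> sup |f| for all f in l_infinity(S).\<close>
definition linf :: "('s \<Rightarrow> real) set" where
  "linf = {f. bounded (range f)}"

definition left_amenable :: "'s::group_add itself \<Rightarrow> bool" where
  "left_amenable _ \<longleftrightarrow>
     (\<exists>m :: ('s \<Rightarrow> real) \<Rightarrow> real.
        (\<forall>f\<in>linf. \<forall>g\<in>linf. \<forall>a b. m (\<lambda>t. a * f t + b * g t) = a * m f + b * m g) \<and>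
        (\<forall>f\<in>linf. \<bar>m f\<bar> \<le> (SUP t. \<bar>f t\<bar>)) \<and>
        m (\<lambda>_. 1) = 1 \<and>
        (\<forall>f\<in>linf. \<forall>s. m f = m (\<lambda>t. f (s + t))))"

end

(*
  Given f, average the bounded maps t \<mapsto> f (s + t) - f t, which take values in F s, against an
  invariant mean m in the weak-star sense: g s z = m (\<lambda>t. (f (s + t) - f t) z).  Invariance
  of m turns the identity f (s + t + u) - f u = (f (s + (t + u)) - f (t + u)) + (f (t + u) - f u)
  into additivity of g.  The mean of a map with values in a weak-star closed bounded convex set C
  lies in C: otherwise some w strictly separates it from C, and monotonicity of m is violated at w.

  The separation needs no Hahn-Banach theorem.  Weak-star closedness yields finitely many points J
  of Z at which C stays uniformly away from the point p, and a near-nearest point of C to p for the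
  semi-inner product \<Sum>j\<in>J. x j * y j gives the separating w.
*)
theory Submission
  imports Defs
begin

lemma bilinear_form_convex_separation:
  fixes B :: "'a::real_vector \<Rightarrow> 'a \<Rightarrow> real"
  assumes B: "bilinear B" "\<And>x y. B x y = B y x"
    and C: "convex C" "C \<noteq> {}"
    and gap: "e > 0" "\<And>x. x \<in> C \<Longrightarrow> e \<le> B (x - p) (x - p)"
    and diam: "\<And>x y. x \<in> C \<Longrightarrow> y \<in> C \<Longrightarrow> B (x - y) (x - y) \<le> D"
  obtains a where "\<And>x. x \<in> C \<Longrightarrow> e / 2 \<le> B a (x - p)"
proof -
  let ?Q = "\<lambda>x. B x x"
  have square_expand: "?Q (a + t *\<^sub>R b) = ?Q a + 2 * t * B a b + t\<^sup>2 * ?Q b" for a b t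
    using B by (simp add: bilinear_ladd bilinear_radd bilinear_lmul bilinear_rmul
        algebra_simps power2_eq_square)
  define d where "d = (INF x\<in>C. ?Q (x - p))"
  have bdd: "bdd_below ((\<lambda>x. ?Q (x - p)) ` C)"
    using gap(2) by (intro bdd_belowI2)
  have d_le: "d \<le> ?Q (x - p)" if "x \<in> C" for x
    unfolding d_def using bdd that by (rule cINF_lower)
  have "e \<le> d"
    unfolding d_def using C(2) gap(2) by (rule cINF_greatest)
  then have d_pos: "d > 0" using gap(1) by linarith
  have "D \<ge> 0"
    using C(2) diam bilinear_lzero[OF B(1)] by fastforce
  \<comment> \<open>small enough that the quadratic term t^2 D is dominated by t d\<close>
  define t where "t = min 1 (d / (4 * (D + 1)))"
  have t: "0 < t" "t \<le> 1" "t * D \<le> d / 4"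
  proof -
    show "0 < t" "t \<le> 1" unfolding t_def using d_pos \<open>D \<ge> 0\<close> by auto
    have "t * (D + 1) \<le> d / (4 * (D + 1)) * (D + 1)"
      unfolding t_def using \<open>D \<ge> 0\<close> by (intro mult_right_mono) auto
    also have "\<dots> = d / 4" using \<open>D \<ge> 0\<close> by (simp add: field_simps)
    finally have "t * (D + 1) \<le> d / 4" .
    then show "t * D \<le> d / 4" using \<open>0 < t\<close> by (simp add: algebra_simps)
  qed
  obtain x0 where x0: "x0 \<in> C" "?Q (x0 - p) < d + t * d / 8"
  proof -
    have "(INF x\<in>C. ?Q (x - p)) < d + t * d / 8"
      using t(1) d_pos unfolding d_def[symmetric] by simp
    then show thesis using cINF_less_iff[OF C(2) bdd] that by blast
  qed
  define a where "a = x0 - p"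
  have "e / 2 \<le> B a (x - p)" if x: "x \<in> C" for x
  proof -
    \<comment> \<open>x0 is nearly nearest to p, so moving from x0 towards x cannot decrease ?Q (_ - p) by
      much; hence B a (x - x0) is almost nonnegative\<close>
    define b where "b = x - x0"
    have "(1 - t) *\<^sub>R x0 + t *\<^sub>R x \<in> C"
      using C(1) x0(1) x t(1,2) by (intro convexD) auto
    moreover have "(1 - t) *\<^sub>R x0 + t *\<^sub>R x - p = a + t *\<^sub>R b"
      unfolding a_def b_def by (simp add: algebra_simps)
    ultimately have "d \<le> ?Q a + 2 * t * B a b + t\<^sup>2 * ?Q b"
      using d_le square_expand by metis
    moreover have "t\<^sup>2 * ?Q b \<le> t\<^sup>2 * D"
      unfolding b_def using diam[OF x x0(1)] by (intro mult_left_mono) auto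
    ultimately have "0 < t * (2 * B a b + d / 8 + t * D)"
      using x0(2) unfolding a_def by (simp add: algebra_simps power2_eq_square)
    then have "- 3 * d / 16 < B a b"
      using t(1,3) by (simp add: zero_less_mult_iff)
    moreover have "B a (x - p) = B a b + ?Q a"
      unfolding a_def b_def by (simp add: bilinear_radd[OF B(1), symmetric])
    moreover have "d \<le> ?Q a" unfolding a_def using d_le x0(1) .
    ultimately show ?thesis using \<open>e \<le> d\<close> d_pos by linarith
  qed
  then show ?thesis using that by blast
qed

lemma weak_star_closed_coordinate_gap:
  fixes C :: "('z::real_normed_vector \<Rightarrow>\<^sub>L real) set"
  assumes "weak_star_closed C" "p \<notin> C"
  obtains J \<epsilon> where "finite J" "\<epsilon> > 0" "\<And>x. x \<in> C \<Longrightarrow> \<exists>j\<in>J. \<epsilon> \<le> \<bar>x j - p j\<bar>"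
proof -
  have "topspace (weak_star_topology :: ('z \<Rightarrow>\<^sub>L real) topology) = UNIV"
    by (simp add: weak_star_topology_def topspace_pullback_topology)
  then have "openin weak_star_topology (- C)"
    using assms(1) unfolding weak_star_closed_def closedin_def by (simp add: Compl_eq_Diff_UNIV)
  then obtain V where V: "openin (product_topology (\<lambda>_. euclideanreal) UNIV) V"
      "- C = blinfun_apply -` V \<inter> UNIV"
    unfolding weak_star_topology_def openin_pullback_topology by blast
  have "blinfun_apply p \<in> V" using V(2) assms(2) by blast
  then obtain U where U: "finite {i. U i \<noteq> UNIV}" "\<And>i. open (U i)"
      "blinfun_apply p \<in> Pi\<^sub>E UNIV U" "Pi\<^sub>E UNIV U \<subseteq> V"
    using V(1) unfolding openin_product_topology_alt by auto
  define J where "J = {i. U i \<noteq> UNIV}"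
  have "\<exists>r>0. ball (p i) r \<subseteq> U i" for i
    using U(2,3) by (auto simp: PiE_iff open_contains_ball)
  then obtain r where r: "\<And>i. r i > 0" "\<And>i. ball (p i) (r i) \<subseteq> U i" by metis
  define \<epsilon> where "\<epsilon> = Min (insert 1 (r ` J))"
  have "finite J" using U(1) by (simp add: J_def)
  then have \<epsilon>: "\<epsilon> > 0" "\<And>i. i \<in> J \<Longrightarrow> \<epsilon> \<le> r i"
    unfolding \<epsilon>_def using r(1) by auto
  have "\<exists>j\<in>J. \<epsilon> \<le> \<bar>x j - p j\<bar>" if "x \<in> C" for x
  proof -
    have "blinfun_apply x \<notin> Pi\<^sub>E UNIV U" using V(2) U(4) that by blast
    then obtain i where i: "x i \<notin> U i" by (auto simp: PiE_iff)
    then have "i \<in> J" unfolding J_def by auto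
    have "r i \<le> \<bar>x i - p i\<bar>"
      using r(2) i by (force simp: dist_real_def abs_minus_commute)
    then show ?thesis using \<epsilon>(2) \<open>i \<in> J\<close> by force
  qed
  with \<open>finite J\<close> \<epsilon>(1) that show ?thesis by blast
qed

definition coordinate_form :: "'z set \<Rightarrow> ('z::real_normed_vector \<Rightarrow>\<^sub>L real) \<Rightarrow> ('z \<Rightarrow>\<^sub>L real) \<Rightarrow> real"
  where "coordinate_form J x y = (\<Sum>j\<in>J. x j * y j)"

lemma bilinear_coordinate_form: "bilinear (coordinate_form J)"
  unfolding bilinear_def coordinate_form_def
  by (auto intro!: linearI simp: blinfun.add_left blinfun.scaleR_left algebra_simps
      sum.distrib sum_distrib_left)

lemma coordinate_form_commute: "coordinate_form J x y = coordinate_form J y x"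
  by (simp add: coordinate_form_def mult.commute)

lemma coordinate_form_eq_apply: "coordinate_form J x y = y (\<Sum>j\<in>J. x j *\<^sub>R j)"
  by (simp add: coordinate_form_def blinfun.sum_right blinfun.scaleR_right mult.commute)

lemma coordinate_form_le_norm: "coordinate_form J x x \<le> (norm x)\<^sup>2 * (\<Sum>j\<in>J. (norm j)\<^sup>2)"
  unfolding coordinate_form_def sum_distrib_left
proof (rule sum_mono)
  fix j
  have "\<bar>x j\<bar> \<le> norm x * norm j" using norm_blinfun[of x j] by simp
  then have "\<bar>x j\<bar>\<^sup>2 \<le> (norm x * norm j)\<^sup>2" by (rule power_mono) simp
  then show "x j * x j \<le> (norm x)\<^sup>2 * (norm j)\<^sup>2"
    by (simp add: power2_eq_square algebra_simps)
qed

lemma coordinate_form_ge_square: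
  fixes x :: "'z::real_normed_vector \<Rightarrow>\<^sub>L real"
  assumes "finite J" "j \<in> J"
  shows "(x j)\<^sup>2 \<le> coordinate_form J x x"
  unfolding coordinate_form_def power2_eq_square using assms by (intro member_le_sum) auto

lemma weak_star_closed_convex_separation:
  fixes C :: "('z::real_normed_vector \<Rightarrow>\<^sub>L real) set"
  assumes "weak_star_closed C" "bounded C" "convex C" "p \<notin> C"
  obtains w \<delta> where "\<delta> > 0" "\<And>x. x \<in> C \<Longrightarrow> p w + \<delta> \<le> x w"
proof (cases "C = {}")
  case False
  obtain J \<epsilon> where J: "finite J" "\<epsilon> > 0" "\<And>x. x \<in> C \<Longrightarrow> \<exists>j\<in>J. \<epsilon> \<le> \<bar>x j - p j\<bar>"
    using weak_star_closed_coordinate_gap[OF assms(1,4)] by blast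
  have gap: "\<epsilon>\<^sup>2 \<le> coordinate_form J (x - p) (x - p)" if x: "x \<in> C" for x
  proof -
    obtain j where "j \<in> J" "\<epsilon> \<le> \<bar>(x - p) j\<bar>"
      using J(3)[OF x] by (auto simp only: blinfun.diff_left)
    then have "\<epsilon>\<^sup>2 \<le> ((x - p) j)\<^sup>2"
      using J(2) abs_le_square_iff[of \<epsilon> "(x - p) j"] by simp
    also have "\<dots> \<le> coordinate_form J (x - p) (x - p)"
      using J(1) \<open>j \<in> J\<close> by (rule coordinate_form_ge_square)
    finally show ?thesis .
  qed
  obtain R where R: "\<And>x. x \<in> C \<Longrightarrow> norm x \<le> R" using assms(2) bounded_iff by blast
  have diam: "coordinate_form J (x - y) (x - y) \<le> (2 * R)\<^sup>2 * (\<Sum>j\<in>J. (norm j)\<^sup>2)"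
    if "x \<in> C" "y \<in> C" for x y
  proof -
    have "norm (x - y) \<le> 2 * R"
      using norm_triangle_ineq4[of x y] R[OF that(1)] R[OF that(2)] by linarith
    then have "(norm (x - y))\<^sup>2 \<le> (2 * R)\<^sup>2" by (rule power_mono) simp
    then have "(norm (x - y))\<^sup>2 * (\<Sum>j\<in>J. (norm j)\<^sup>2) \<le> (2 * R)\<^sup>2 * (\<Sum>j\<in>J. (norm j)\<^sup>2)"
      by (rule mult_right_mono) (simp add: sum_nonneg)
    with coordinate_form_le_norm show ?thesis by (rule order_trans)
  qed
  obtain a where a: "\<And>x. x \<in> C \<Longrightarrow> \<epsilon>\<^sup>2 / 2 \<le> coordinate_form J a (x - p)"
    using bilinear_form_convex_separation[OF bilinear_coordinate_form coordinate_form_commute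
        assms(3) False _ gap diam] J(2) by auto
  show ?thesis
  proof (rule that)
    show "\<epsilon>\<^sup>2 / 2 > 0" using J(2) by simp
    show "p (\<Sum>j\<in>J. a j *\<^sub>R j) + \<epsilon>\<^sup>2 / 2 \<le> x (\<Sum>j\<in>J. a j *\<^sub>R j)" if "x \<in> C" for x
      using a[OF that] by (simp add: coordinate_form_eq_apply blinfun.diff_left)
  qed
qed (use that[of 1] in simp)

lemma linfI: "(\<And>t. \<bar>f t\<bar> \<le> c) \<Longrightarrow> f \<in> linf"
  unfolding linf_def bounded_iff by auto

lemma bounded_range_blinfun_apply_le:
  fixes h :: "'s \<Rightarrow> ('z::real_normed_vector \<Rightarrow>\<^sub>L real)"
  assumes "bounded (range h)"
  obtains c where "\<And>t z. \<bar>h t z\<bar> \<le> c * norm z"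
proof -
  obtain c where "\<And>t. norm (h t) \<le> c" using assms unfolding bounded_iff by blast
  then have "\<bar>h t z\<bar> \<le> c * norm z" for t z
    using norm_blinfun[of "h t" z] by (simp add: mult_right_mono order_trans)
  then show ?thesis by (rule that)
qed

lemma bounded_range_blinfun_apply_linf:
  fixes h :: "'s \<Rightarrow> ('z::real_normed_vector \<Rightarrow>\<^sub>L real)"
  shows "bounded (range h) \<Longrightarrow> (\<lambda>t. h t z) \<in> linf"
  by (metis bounded_range_blinfun_apply_le linfI)

locale invariant_mean =
  fixes m :: "('s::group_add \<Rightarrow> real) \<Rightarrow> real"
  assumes linear_combination:
      "\<And>f g a b. f \<in> linf \<Longrightarrow> g \<in> linf \<Longrightarrow> m (\<lambda>t. a * f t + b * g t) = a * m f + b * m g"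
    and abs_le_Sup: "\<And>f. f \<in> linf \<Longrightarrow> \<bar>m f\<bar> \<le> (SUP t. \<bar>f t\<bar>)"
    and normalized: "m (\<lambda>_. 1) = 1"
    and shift_invariant: "\<And>f s. f \<in> linf \<Longrightarrow> m (\<lambda>t. f (s + t)) = m f"

lemma left_amenableE:
  assumes "left_amenable TYPE('s)"
  obtains m :: "('s::group_add \<Rightarrow> real) \<Rightarrow> real" where "invariant_mean m"
proof -
  obtain m :: "('s \<Rightarrow> real) \<Rightarrow> real" where
    "\<forall>f\<in>linf. \<forall>g\<in>linf. \<forall>a b. m (\<lambda>t. a * f t + b * g t) = a * m f + b * m g"
    "\<forall>f\<in>linf. \<bar>m f\<bar> \<le> (SUP t. \<bar>f t\<bar>)" "m (\<lambda>_. 1) = 1"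
    "\<forall>f\<in>linf. \<forall>s. m f = m (\<lambda>t. f (s + t))"
    using assms unfolding left_amenable_def by blast
  then have "invariant_mean m" by unfold_locales auto
  then show thesis by (rule that)
qed

context invariant_mean
begin

lemma mean_add: "f \<in> linf \<Longrightarrow> g \<in> linf \<Longrightarrow> m (\<lambda>t. f t + g t) = m f + m g"
  using linear_combination[of f g 1 1] by simp

lemma mean_scale: "f \<in> linf \<Longrightarrow> m (\<lambda>t. c * f t) = c * m f"
  using linear_combination[of f f c 0] by simp

lemma mean_abs_le:
  assumes "\<And>t. \<bar>f t\<bar> \<le> c"
  shows "\<bar>m f\<bar> \<le> c"
proof -
  have "(SUP t. \<bar>f t\<bar>) \<le> c" by (rule cSUP_least) (auto simp: assms)
  with abs_le_Sup[OF linfI[of f c]] assms show ?thesis by fastforce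
qed

lemma mean_lower_bound:
  assumes "f \<in> linf" "\<And>t. c \<le> f t"
  shows "c \<le> m f"
proof -
  obtain M where M: "\<And>t. \<bar>f t\<bar> \<le> M" using assms(1) unfolding linf_def bounded_iff by auto
  have const: "(\<lambda>_. 1) \<in> linf" by (rule linfI[of _ 1]) simp
  \<comment> \<open>M - f takes values in [0, M - c]\<close>
  have "m (\<lambda>t. M - f t) = M - m f"
    using linear_combination[OF const assms(1), of M "- 1"] normalized by simp
  moreover have "\<bar>m (\<lambda>t. M - f t)\<bar> \<le> M - c"
    using M assms(2) by (intro mean_abs_le) (simp add: abs_le_iff)
  ultimately show ?thesis by linarith
qed

\<comment> \<open>junk unless h has bounded range\<close>
definition blinfun_mean :: "('s \<Rightarrow> ('z::real_normed_vector \<Rightarrow>\<^sub>L real)) \<Rightarrow> ('z \<Rightarrow>\<^sub>L real)"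
  where "blinfun_mean h = Blinfun (\<lambda>z. m (\<lambda>t. h t z))"

lemma blinfun_mean_apply:
  assumes "bounded (range h)"
  shows "blinfun_mean h z = m (\<lambda>t. h t z)"
proof -
  obtain c where c: "\<And>t z. \<bar>h t z\<bar> \<le> c * norm z"
    using bounded_range_blinfun_apply_le[OF assms] by blast
  have linf: "(\<lambda>t. h t z) \<in> linf" for z
    using assms by (rule bounded_range_blinfun_apply_linf)
  have "bounded_linear (\<lambda>z. m (\<lambda>t. h t z))"
  proof (rule bounded_linear_intro[where K = c])
    show "m (\<lambda>t. h t (x + y)) = m (\<lambda>t. h t x) + m (\<lambda>t. h t y)" for x y
      using mean_add[OF linf linf] by (simp add: blinfun.add_right)
    show "m (\<lambda>t. h t (r *\<^sub>R x)) = r *\<^sub>R m (\<lambda>t. h t x)" for r x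
      using mean_scale[OF linf] by (simp add: blinfun.scaleR_right)
    show "norm (m (\<lambda>t. h t x)) \<le> norm x * c" for x
      using mean_abs_le[OF c] by (simp add: mult.commute)
  qed
  then show ?thesis unfolding blinfun_mean_def by (simp add: bounded_linear_Blinfun_apply)
qed

lemma blinfun_mean_add:
  assumes "bounded (range h)" "bounded (range k)"
  shows "blinfun_mean (\<lambda>t. h t + k t) = blinfun_mean h + blinfun_mean k"
proof (rule blinfun_eqI)
  have "bounded (range (\<lambda>t. h t + k t))"
    using bounded_plus[OF assms] by (rule bounded_subset) auto
  moreover have "(\<lambda>t. h t z) \<in> linf" "(\<lambda>t. k t z) \<in> linf" for z
    using assms by (simp_all add: bounded_range_blinfun_apply_linf)
  ultimately show "blinfun_mean (\<lambda>t. h t + k t) z = (blinfun_mean h + blinfun_mean k) z" for z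
    using assms by (simp add: blinfun_mean_apply blinfun.add_left mean_add)
qed

lemma blinfun_mean_shift:
  assumes "bounded (range h)"
  shows "blinfun_mean (\<lambda>t. h (s + t)) = blinfun_mean h"
proof (rule blinfun_eqI)
  have "bounded (range (\<lambda>t. h (s + t)))"
    using assms by (rule bounded_subset) auto
  moreover have "(\<lambda>t. h t z) \<in> linf" for z
    using assms by (rule bounded_range_blinfun_apply_linf)
  ultimately show "blinfun_mean (\<lambda>t. h (s + t)) z = blinfun_mean h z" for z
    using assms shift_invariant[of "\<lambda>t. h t z" s] by (simp add: blinfun_mean_apply)
qed

lemma blinfun_mean_differences_additive:
  fixes f :: "'s \<Rightarrow> ('z::real_normed_vector \<Rightarrow>\<^sub>L real)"
  assumes bounded: "\<And>s. bounded (range (\<lambda>t. f (s + t) - f t))"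
  defines "g s \<equiv> blinfun_mean (\<lambda>t. f (s + t) - f t)"
  shows "g (s + s') = g s + g s'"
proof -
  have shifted: "bounded (range (\<lambda>t. f (s + (s' + t)) - f (s' + t)))"
    using bounded by (rule bounded_subset) auto
  have "g (s + s') = blinfun_mean (\<lambda>t. (f (s + (s' + t)) - f (s' + t)) + (f (s' + t) - f t))"
    unfolding g_def by (simp add: add.assoc)
  also have "\<dots> = blinfun_mean (\<lambda>t. f (s + (s' + t)) - f (s' + t)) + g s'"
    unfolding g_def using shifted bounded by (rule blinfun_mean_add)
  also have "blinfun_mean (\<lambda>t. f (s + (s' + t)) - f (s' + t)) = g s"
    unfolding g_def using bounded by (rule blinfun_mean_shift)
  finally show ?thesis .
qed

lemma blinfun_mean_mem:
  fixes C :: "('z::real_normed_vector \<Rightarrow>\<^sub>L real) set"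
  assumes "weak_star_closed C" "bounded C" "convex C" "\<And>t. h t \<in> C"
  shows "blinfun_mean h \<in> C"
proof (rule ccontr)
  assume "blinfun_mean h \<notin> C"
  then obtain w \<delta> where \<delta>: "\<delta> > 0" "\<And>x. x \<in> C \<Longrightarrow> blinfun_mean h w + \<delta> \<le> x w"
    using weak_star_closed_convex_separation assms(1-3) by blast
  have "bounded (range h)" using assms(2) by (rule bounded_subset) (use assms(4) in auto)
  then have "(\<lambda>t. h t w) \<in> linf" by (rule bounded_range_blinfun_apply_linf)
  then have "blinfun_mean h w + \<delta> \<le> m (\<lambda>t. h t w)"
    by (rule mean_lower_bound) (simp_all add: \<delta>(2) assms(4))
  with \<delta>(1) show False
    using blinfun_mean_apply[OF \<open>bounded (range h)\<close>] by simp
qed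

end

theorem theorem11:
  fixes F :: "'s::group_add \<Rightarrow> ('z::banach \<Rightarrow>\<^sub>L real) set"
  assumes "left_amenable TYPE('s)"
    and "\<And>s. F s \<noteq> {} \<and> weak_star_closed (F s) \<and> bounded (F s) \<and> convex (F s)"
  shows "(\<exists>g :: 's \<Rightarrow> ('z \<Rightarrow>\<^sub>L real). (\<forall>s t. g (s + t) = g s + g t) \<and> (\<forall>s. g s \<in> F s))
     \<longleftrightarrow> (\<exists>f :: 's \<Rightarrow> ('z \<Rightarrow>\<^sub>L real). \<forall>s t. f (s + t) - f t \<in> F s)"
proof
  assume "\<exists>g. (\<forall>s t. g (s + t) = g s + g t) \<and> (\<forall>s. g s \<in> F s)"
  then obtain g where "\<And>s t. g (s + t) = g s + g t" "\<And>s. g s \<in> F s" by blast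
  then show "\<exists>f. \<forall>s t. f (s + t) - f t \<in> F s" by (intro exI[of _ g]) simp
next
  assume "\<exists>f. \<forall>s t. f (s + t) - f t \<in> F s"
  then obtain f where f: "\<And>s t. f (s + t) - f t \<in> F s" by blast
  obtain m :: "('s \<Rightarrow> real) \<Rightarrow> real" where "invariant_mean m"
    using assms(1) by (rule left_amenableE)
  then interpret invariant_mean m .
  define g where "g s = blinfun_mean (\<lambda>t. f (s + t) - f t)" for s
  have "bounded (range (\<lambda>t. f (s + t) - f t))" for s
    using assms(2)[of s] f by (auto intro: bounded_subset)
  then have "g (s + t) = g s + g t" for s t
    unfolding g_def by (rule blinfun_mean_differences_additive)
  moreover have "g s \<in> F s" for s
    unfolding g_def using assms(2)[of s] f by (intro blinfun_mean_mem) auto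
  ultimately show "\<exists>g. (\<forall>s t. g (s + t) = g s + g t) \<and> (\<forall>s. g s \<in> F s)" by blast
qed

end
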